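(* For all positive integers $n,k$ and every $\boldsymbol\rho=(\rho_1,\dots,\rho_k)$ of integers with $1\le\rho_\ell\le n\le k$ for all $\ell\in[k]$ and $\sum_{\ell\in[k]}\rho_\ell=n^2$, there exists a $\boldsymbol\rho$-latin square of order $n$.
   Context: A $\boldsymbol\rho$-latin square of order $n$ is an $n\times n$ array in which every cell contains a symbol of $[k]$, each symbol occurs at most once in each row and at most once in each column, and each symbol $\ell$ occurs exactly $\rho_\ell$ times. *)

theory Defs
  imports Main
begin

definition rho_latin_square :: "nat \<Rightarrow> nat \<Rightarrow> (nat \<Rightarrow> nat) \<Rightarrow> (nat \<Rightarrow> nat \<Rightarrow> nat) \<Rightarrow> bool" where
  "rho_latin_square n k rho L \<longleftrightarrow>
     (\<forall>i<n. \<forall>j<n. L i j \<in> {1..k}) \<and>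
     (\<forall>i<n. \<forall>j<n. \<forall>j'<n. L i j = L i j' \<longrightarrow> j = j') \<and>
     (\<forall>j<n. \<forall>i<n. \<forall>i'<n. L i j = L i' j \<longrightarrow> i = i') \<and>
     (\<forall>l\<in>{1..k}. card {(i, j). i < n \<and> j < n \<and> L i j = l} = rho l)"

end

theory Submission
  imports Defs "HOL-Number_Theory.Cong"
begin

text \<open>List the symbols, those with \<open>\<rho>\<^sub>l = n\<close> first, write symbol \<open>l\<close> out \<open>\<rho>\<^sub>l\<close> times,
  and pour the resulting word of length \<open>n\<^sup>2\<close> into the square along the \<open>n\<close> broken diagonals,
  one diagonal after the other. Two cells on one broken diagonal, or on consecutive ones at
  distance at most \<open>n - 2\<close> in the filling order, never share a row or a column. A symbol with
  \<open>\<rho>\<^sub>l = n\<close> fills exactly one diagonal, since all such symbols come first; any other symbol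
  occupies at most \<open>n - 1\<close> consecutive positions.\<close>

definition repeat_each :: "('a \<Rightarrow> nat) \<Rightarrow> 'a list \<Rightarrow> 'a list" where
  "repeat_each c xs = concat (map (\<lambda>x. replicate (c x) x) xs)"

lemma repeat_each_Nil [simp]: "repeat_each c [] = []"
  and repeat_each_Cons [simp]: "repeat_each c (x # xs) = replicate (c x) x @ repeat_each c xs"
  by (simp_all add: repeat_each_def)

lemma length_repeat_each: "length (repeat_each c xs) = sum_list (map c xs)"
  by (induction xs) simp_all

lemma set_repeat_each_subset: "set (repeat_each c xs) \<subseteq> set xs"
  by (induction xs) auto

lemma count_list_repeat_each:
  assumes "distinct xs"
  shows "count_list (repeat_each c xs) l = (if l \<in> set xs then c l else 0)"
  using assms by (induction xs) (auto simp: count_list_eq_length_filter filter_replicate)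

lemma repeat_each_nth_eq_imp_block:
  assumes "distinct xs" "p < q" "q < length (repeat_each c xs)"
    and "repeat_each c xs ! p = repeat_each c xs ! q"
  shows "\<exists>a b. xs = a @ repeat_each c xs ! p # b \<and>
           sum_list (map c a) \<le> p \<and> q < sum_list (map c a) + c (repeat_each c xs ! p)"
  using assms
proof (induction xs arbitrary: p q)
  case Nil
  then show ?case by simp
next
  case (Cons x xs)
  let ?ys = "repeat_each c xs"
  consider "q < c x" | "p < c x" "c x \<le> q" | "c x \<le> p" by linarith
  then show ?case
  proof cases
    case 1
    then show ?thesis using Cons.prems(2) by (intro exI[of _ "[]"] exI[of _ xs]) (simp add: nth_append)
  next
    case 2
    have "?ys ! (q - c x) \<in> set xs"
      using Cons.prems(3) 2 set_repeat_each_subset by (fastforce intro: nth_mem)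
    moreover have "x = ?ys ! (q - c x)" using Cons.prems(4) 2 by (simp add: nth_append)
    ultimately show ?thesis using Cons.prems(1) by simp
  next
    case 3
    have "\<exists>a b. xs = a @ ?ys ! (p - c x) # b \<and> sum_list (map c a) \<le> p - c x \<and>
        q - c x < sum_list (map c a) + c (?ys ! (p - c x))"
      using Cons.prems 3 by (intro Cons.IH) (auto simp: nth_append)
    then obtain a b where "xs = a @ ?ys ! (p - c x) # b" "sum_list (map c a) \<le> p - c x"
        "q - c x < sum_list (map c a) + c (?ys ! (p - c x))"
      by blast
    then show ?thesis using Cons.prems(2) 3
      by (intro exI[of _ "x # a"] exI[of _ b]) (auto simp: nth_append)
  qed
qed

lemma repeat_each_nth_eq_imp_close:
  assumes "distinct (fs @ rs)" "\<forall>x\<in>set fs. c x = n" "\<forall>x\<in>set rs. c x < n"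
    and "p < q" "q < length (repeat_each c (fs @ rs))"
    and "repeat_each c (fs @ rs) ! p = repeat_each c (fs @ rs) ! q"
  shows "p div n = q div n \<or> q - p + 2 \<le> n"
proof -
  let ?x = "repeat_each c (fs @ rs) ! p"
  obtain a b where ab: "fs @ rs = a @ ?x # b" and start: "sum_list (map c a) \<le> p"
    and stop: "q < sum_list (map c a) + c ?x"
    using repeat_each_nth_eq_imp_block[OF assms(1,4-6)] by blast
  show ?thesis
  proof (cases "?x \<in> set fs")
    case True
    have "?x \<notin> set rs" using True assms(1) by auto
    from ab have "a @ ?x # b = fs @ rs" by simp
    then obtain us where "a = fs @ us \<and> us @ ?x # b = rs \<or> a @ us = fs \<and> ?x # b = us @ rs"
      unfolding append_eq_append_conv2 by blast
    then have "set a \<subseteq> set fs"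
      using \<open>?x \<notin> set rs\<close> by (metis in_set_conv_decomp set_append Un_upper1)
    then have "sum_list (map c a) = length a * n"
      using assms(2) by (induction a) auto
    then have "p div n = length a" "q div n = length a"
      using start stop True assms(2,4) by (auto intro!: div_nat_eqI simp: algebra_simps)
    then show ?thesis by simp
  next
    case False
    then have "?x \<in> set rs"
      using ab by (metis Un_iff in_set_conv_decomp set_append)
    then show ?thesis using assms(3,4) start stop by fastforce
  qed
qed

text \<open>Position \<open>p\<close> of the filling order is the cell in row \<open>p mod n\<close> of the
  broken diagonal \<open>{(i, (i + d) mod n)}\<close> with \<open>d = p div n\<close>; \<open>diag_pos\<close> is the inverse map.\<close>

definition diag_row :: "nat \<Rightarrow> nat \<Rightarrow> nat" where
  "diag_row n p = p mod n"

definition diag_col :: "nat \<Rightarrow> nat \<Rightarrow> nat" where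
  "diag_col n p = (p mod n + p div n) mod n"

definition diag_pos :: "nat \<Rightarrow> nat \<Rightarrow> nat \<Rightarrow> nat" where
  "diag_pos n i j = ((j + n - i) mod n) * n + i"

lemma diag_row_less: "0 < n \<Longrightarrow> diag_row n p < n"
  by (simp add: diag_row_def)

lemma diag_col_less: "0 < n \<Longrightarrow> diag_col n p < n"
  by (simp add: diag_col_def)

lemma diag_pos_less:
  assumes "i < n" "j < n"
  shows "diag_pos n i j < n * n"
proof -
  have "(j + n - i) mod n < n" using assms by simp
  then have "((j + n - i) mod n) * n + n \<le> n * n"
    by (metis Suc_leI add.commute mult_Suc mult_le_mono1)
  then show ?thesis using assms(1) unfolding diag_pos_def by linarith
qed

lemma diag_row_pos: "i < n \<Longrightarrow> diag_row n (diag_pos n i j) = i"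
  by (simp add: diag_row_def diag_pos_def)

lemma diag_col_pos:
  assumes "i < n" "j < n"
  shows "diag_col n (diag_pos n i j) = j"
proof -
  have "diag_col n (diag_pos n i j) = (i + (j + n - i) mod n) mod n"
    using assms by (simp add: diag_col_def diag_pos_def)
  also have "\<dots> = (j + n) mod n" using assms by (simp add: mod_add_right_eq)
  finally show ?thesis using assms by simp
qed

lemma inj_on_diag_pos: "inj_on (\<lambda>(i, j). diag_pos n i j) ({..<n} \<times> {..<n})"
proof (rule inj_onI, clarsimp)
  fix i j i' j'
  assume "i < n" "j < n" "i' < n" "j' < n" "diag_pos n i j = diag_pos n i' j'"
  then show "i = i' \<and> j = j'" by (metis diag_row_pos diag_col_pos)
qed

lemma diag_pos_row_col:
  assumes "p < n * n"
  shows "diag_pos n (diag_row n p) (diag_col n p) = p"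
proof -
  have "n > 0" using assms by (cases n) auto
  have "diag_col n p + n - p mod n + p mod n = diag_col n p + n"
    using mod_less_divisor[OF \<open>n > 0\<close>, of p] by linarith
  moreover have "[diag_col n p + n = p div n + p mod n] (mod n)"
    by (simp add: diag_col_def cong_def add.commute)
  ultimately have "[diag_col n p + n - p mod n + p mod n = p div n + p mod n] (mod n)"
    by simp
  then have "[diag_col n p + n - p mod n = p div n] (mod n)"
    by (simp only: cong_add_rcancel_nat)
  then have "(diag_col n p + n - p mod n) mod n = (p div n) mod n"
    unfolding cong_def .
  also have "\<dots> = p div n" using assms by (simp add: less_mult_imp_div_less)
  finally show ?thesis by (simp add: diag_pos_def diag_row_def)
qed

lemma diag_cells_separated:
  assumes "0 < n" "p < q" "p div n = q div n \<or> q - p + 2 \<le> n"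
  shows "diag_row n p \<noteq> diag_row n q \<and> diag_col n p \<noteq> diag_col n q"
proof -
  have p: "p div n * n + p mod n = p" and q: "q div n * n + q mod n = q"
    and "p mod n < n" and "q mod n < n"
    using \<open>0 < n\<close> by simp_all
  have cols: "diag_col n p = diag_col n q \<longleftrightarrow>
      [p mod n + p div n = q mod n + q div n] (mod n)"
    by (simp add: diag_col_def cong_def)
  show ?thesis
  proof (cases "p div n = q div n")
    case True
    then have "p mod n \<noteq> q mod n" using p q assms(2) unfolding True by linarith
    moreover have "[p mod n \<noteq> q mod n] (mod n)"
      using calculation by (simp add: cong_def)
    ultimately show ?thesis
      by (simp add: diag_row_def cols True cong_add_rcancel_nat del: cong_mod_left cong_mod_right)
  next
    case False
    then have gap: "q - p + 2 \<le> n" using assms(3) by simp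
    have "p div n < q div n" using False assms(2) by (simp add: div_le_mono le_neq_implies_less)
    then have "(p div n + 1) * n \<le> q div n * n" by (intro mult_le_mono1) simp
    then have "(p div n + 1) * n \<le> q" using q by linarith
    moreover have "q < (p div n + 2) * n"
      using gap p \<open>p mod n < n\<close> unfolding distrib_right by linarith
    ultimately have qdiv: "q div n = p div n + 1"
      by (intro div_nat_eqI) (simp_all add: algebra_simps)
    have rows: "q mod n + 2 \<le> p mod n"
      using gap p q assms(2) unfolding qdiv distrib_right by linarith
    then have "[p mod n \<noteq> q mod n + 1] (mod n)"
      using \<open>p mod n < n\<close> by (simp add: cong_def)
    then have "[p mod n + p div n \<noteq> (q mod n + 1) + p div n] (mod n)"
      unfolding cong_add_rcancel_nat .
    then have "[p mod n + p div n \<noteq> q mod n + q div n] (mod n)"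
      unfolding qdiv by (simp only: ac_simps not_False_eq_True)
    then show ?thesis using rows by (simp add: diag_row_def cols)
  qed
qed

lemma rho_latin_square_diag_filling:
  assumes "0 < n" "length ys = n * n" "set ys \<subseteq> {1..k}"
    and close: "\<And>p q. p < q \<Longrightarrow> q < n * n \<Longrightarrow> ys ! p = ys ! q \<Longrightarrow>
                  p div n = q div n \<or> q - p + 2 \<le> n"
    and count: "\<And>l. l \<in> {1..k} \<Longrightarrow> count_list ys l = rho l"
  shows "rho_latin_square n k rho (\<lambda>i j. ys ! diag_pos n i j)"
proof -
  let ?L = "\<lambda>i j. ys ! diag_pos n i j"
  have separated: "diag_row n p \<noteq> diag_row n q \<and> diag_col n p \<noteq> diag_col n q"
    if "p \<noteq> q" "p < n * n" "q < n * n" "ys ! p = ys ! q" for p q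
    using that diag_cells_separated[OF \<open>0 < n\<close>] close by (metis linorder_neq_iff)
  have entries: "?L i j \<in> {1..k}" if "i < n" "j < n" for i j
  proof -
    have "diag_pos n i j < length ys" using that assms(2) diag_pos_less by simp
    then show ?thesis by (rule subsetD[OF assms(3) nth_mem])
  qed
  have rows: "j = j'" if "i < n" "j < n" "j' < n" "?L i j = ?L i j'" for i j j'
    using that separated[of "diag_pos n i j" "diag_pos n i j'"]
    by (metis diag_pos_less diag_row_pos diag_col_pos)
  have cols: "i = i'" if "j < n" "i < n" "i' < n" "?L i j = ?L i' j" for i i' j
    using that separated[of "diag_pos n i j" "diag_pos n i' j"]
    by (metis diag_pos_less diag_row_pos diag_col_pos)
  have bij: "bij_betw (\<lambda>(i, j). diag_pos n i j) {(i, j). i < n \<and> j < n \<and> ?L i j = l}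
          {p. p < length ys \<and> ys ! p = l}" for l
  proof (rule bij_betw_imageI)
    show "inj_on (\<lambda>(i, j). diag_pos n i j) {(i, j). i < n \<and> j < n \<and> ?L i j = l}"
      by (rule inj_on_subset[OF inj_on_diag_pos]) auto
    have "p \<in> (\<lambda>(i, j). diag_pos n i j) ` {(i, j). i < n \<and> j < n \<and> ?L i j = l}"
      if "p < n * n" "ys ! p = l" for p
    proof (rule image_eqI)
      show "p = (\<lambda>(i, j). diag_pos n i j) (diag_row n p, diag_col n p)"
        using diag_pos_row_col[OF that(1)] by simp
      show "(diag_row n p, diag_col n p) \<in> {(i, j). i < n \<and> j < n \<and> ?L i j = l}"
        using that \<open>0 < n\<close> by (simp add: diag_row_less diag_col_less diag_pos_row_col)
    qed
    moreover have "diag_pos n i j < length ys" if "i < n" "j < n" for i j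
      using that assms(2) diag_pos_less by simp
    ultimately show "(\<lambda>(i, j). diag_pos n i j) ` {(i, j). i < n \<and> j < n \<and> ?L i j = l} =
        {p. p < length ys \<and> ys ! p = l}"
      using assms(2) by fastforce
  qed
  have counts: "card {(i, j). i < n \<and> j < n \<and> ?L i j = l} = rho l" if "l \<in> {1..k}" for l
  proof -
    have "card {(i, j). i < n \<and> j < n \<and> ?L i j = l} = card {p. p < length ys \<and> ys ! p = l}"
      by (rule bij_betw_same_card[OF bij])
    also have "\<dots> = count_list ys l"
      by (simp add: count_list_eq_length_filter length_filter_conv_card eq_commute)
    finally show ?thesis using count[OF that] by simp
  qed
  show ?thesis
    unfolding rho_latin_square_def using entries rows cols counts by blast
qed

lemma rho_latin_square_exists:
  fixes c :: "nat \<Rightarrow> nat"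
  assumes "0 < n" "\<forall>l\<in>{1..k}. c l \<le> n" "(\<Sum>l\<in>{1..k}. c l) = n * n"
  shows "\<exists>L. rho_latin_square n k c L"
proof -
  define fs where "fs = filter (\<lambda>l. c l = n) [1..<Suc k]"
  define rs where "rs = filter (\<lambda>l. c l \<noteq> n) [1..<Suc k]"
  define ys where "ys = repeat_each c (fs @ rs)"
  have distinct: "distinct (fs @ rs)" and symbols: "set (fs @ rs) = {1..k}"
    by (auto simp: fs_def rs_def)
  have full: "\<forall>x\<in>set fs. c x = n" by (simp add: fs_def)
  have partial: "\<forall>x\<in>set rs. c x < n" using assms(2) by (auto simp: rs_def nat_less_le)
  have length: "length ys = n * n"
    unfolding ys_def length_repeat_each sum_list_distinct_conv_sum_set[OF distinct] symbols
    by (rule assms(3))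
  have close: "p div n = q div n \<or> q - p + 2 \<le> n"
    if "p < q" "q < n * n" "ys ! p = ys ! q" for p q
    using that length unfolding ys_def
    by (intro repeat_each_nth_eq_imp_close[OF distinct full partial]) simp_all
  have "set ys \<subseteq> {1..k}" using set_repeat_each_subset symbols unfolding ys_def by metis
  moreover have "count_list ys l = c l" if "l \<in> {1..k}" for l
    using that distinct symbols by (simp add: ys_def count_list_repeat_each)
  ultimately show ?thesis
    using rho_latin_square_diag_filling[OF \<open>0 < n\<close> length _ close] by blast
qed

theorem theorem2p2:
  fixes n k :: nat and rho :: "nat \<Rightarrow> int"
  assumes "n > 0" and "k > 0"
    and "\<forall>l\<in>{1..k}. 1 \<le> rho l \<and> rho l \<le> int n"
    and "n \<le> k"
    and "(\<Sum>l\<in>{1..k}. rho l) = int n ^ 2"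
  shows "\<exists>L. rho_latin_square n k (\<lambda>l. nat (rho l)) L"
proof (rule rho_latin_square_exists)
  show "\<forall>l\<in>{1..k}. nat (rho l) \<le> n" using assms(3) by (simp add: nat_le_iff)
  have "int (\<Sum>l\<in>{1..k}. nat (rho l)) = (\<Sum>l\<in>{1..k}. int (nat (rho l)))"
    by simp
  also have "\<dots> = (\<Sum>l\<in>{1..k}. rho l)"
    using assms(3) by (intro sum.cong) fastforce+
  also have "\<dots> = int (n * n)" using assms(5) by (simp add: power2_eq_square)
  finally show "(\<Sum>l\<in>{1..k}. nat (rho l)) = n * n" by (simp only: of_nat_eq_iff)
qed (use assms(1) in simp)

end
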